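(* Let $C>0$. There exist $K,\varepsilon_0>0$ such that for all $0<\varepsilon<\varepsilon_0$, all $0<\zeta\le C\varepsilon^{3q-1}$ and all $s\ge0$, $$\inf\Big\{L(\nu)\ :\ \nu\in{\rm AC}([0,1],\mathbb{R}^2),\ \nu(0)=(0,-s),\ \nu(1)=(\varepsilon^q,\varepsilon),\ \nu([0,1])\subset D_\zeta\Big\}\ \ge\ L_{\rm SR}(\gamma_{s,\varepsilon})-K\zeta^{1-\frac1b}.$$
   Context: Fix an odd integer $b\geq5$, $q=b/2$. $L(\cdot)$ is the Euclidean length of plane curves. Let $P(x_1,x_2)=x_1^2-x_2^b$, and $\widetilde P(x_1,x_2)=P(x_1,x_2)$ if $x_2\ge0$, $\widetilde P(x_1,x_2)=x_1^2$ if $x_2<0$. For $\zeta>0$, $D_\zeta=\{x\in\mathbb{R}^2: x_1\ge0,\ \widetilde P(x)\le\zeta\}$. Let $\gamma(t)=(0,t,\tfrac{t^{2b+1}}{2b+1})$ for $t<0$ and $\gamma(t)=(t^q,t,0)$ for $t\ge0$, $\gamma_{s,\varepsilon}=\gamma|_{[-s,\varepsilon]}$; its sub-Riemannian length equals the Euclidean length of its projection to the first two coordinates, i.e. $L_{\rm SR}(\gamma_{s,\varepsilon})=s+\int_0^\varepsilon\sqrt{1+q^2t^{2q-2}}\,dt$. *)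

theory Defs
  imports "HOL-Analysis.Analysis"
begin

text \<open>Points of the plane are pairs; the norm on real * real is the Euclidean one.\<close>

definition P :: "nat \<Rightarrow> real \<times> real \<Rightarrow> real" where
  "P b x = (fst x)^2 - (snd x)^b"

definition Ptilde :: "nat \<Rightarrow> real \<times> real \<Rightarrow> real" where
  "Ptilde b x = (if snd x \<ge> 0 then P b x else (fst x)^2)"

definition Dzeta :: "nat \<Rightarrow> real \<Rightarrow> (real \<times> real) set" where
  "Dzeta b \<zeta> = {x. fst x \<ge> 0 \<and> Ptilde b x \<le> \<zeta>}"

definition abs_cont_on :: "real \<Rightarrow> real \<Rightarrow> (real \<Rightarrow> 'a::real_normed_vector) \<Rightarrow> bool" where
  "abs_cont_on a b f \<longleftrightarrow>
     (\<forall>e>0. \<exists>d>0. \<forall>(n::nat) (l::nat \<Rightarrow> real) (r::nat \<Rightarrow> real).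
        (\<forall>i<n. a \<le> l i \<and> l i \<le> r i \<and> r i \<le> b) \<and>
        (\<forall>i<n. \<forall>j<n. i \<noteq> j \<longrightarrow> r i \<le> l j \<or> r j \<le> l i) \<and>
        (\<Sum>i<n. r i - l i) < d
        \<longrightarrow> (\<Sum>i<n. norm (f (r i) - f (l i))) < e)"

definition curve_length :: "real \<Rightarrow> real \<Rightarrow> (real \<Rightarrow> 'a::real_normed_vector) \<Rightarrow> real" where
  "curve_length a b f = Sup {(\<Sum>i<n. norm (f (t (Suc i)) - f (t i))) | n t.
        t 0 = a \<and> t n = b \<and> (\<forall>i<n. t i \<le> t (Suc i))}"

text \<open>Sub-Riemannian length of gamma restricted to [-s, eps], as given in the context.\<close>

definition L_SR :: "nat \<Rightarrow> real \<Rightarrow> real \<Rightarrow> real" where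
  "L_SR b s \<epsilon> = s + integral {0..\<epsilon>}
      (\<lambda>t. sqrt (1 + (real b / 2)^2 * t powr (2 * (real b / 2) - 2)))"

end

theory Submission
  imports Defs
begin

(* The bound is proved with a calibration. Let l be the arclength of the profile x = y^q (the
   projection of gamma for t >= 0) and beta(y) the x-component of its unit tangent. The function
     Phi(x, y) = l(y) + beta(y) (x - y^q - eta) + delta / (y + zeta^(1/b)),   delta = 4 q (q - 1) zeta,
   has gradient of norm at most 1 on the part of D_zeta with 0 <= y <= eps, as long as eps and zeta
   are small and x stays below sqrt (zeta + y^b) + eta. Inscribe in the curve a polygon through points
   at the heights -s, 0, eps/N, ..., eps, with N so large that sqrt (zeta + y^b) oscillates by less
   than eta between consecutive heights. The first side is at least s long, and along each further
   side Phi grows by at most the side length; from height 0 to the endpoint (eps^q, eps) Phi grows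
   by at least l(eps) - eta - 4 q (q - 1) zeta^(1 - 1/b). Letting eta tend to 0 gives the theorem
   with K = 4 q (q - 1). *)

section \<open>Inscribed polygons of absolutely continuous curves\<close>

definition cell_clamp :: "real \<Rightarrow> real \<Rightarrow> nat \<Rightarrow> real \<Rightarrow> real" where
  "cell_clamp a h j x = max (a + real j * h) (min (a + real (Suc j) * h) x)"

lemma cell_clamp_mono: "h \<ge> 0 \<Longrightarrow> x \<le> y \<Longrightarrow> cell_clamp a h j x \<le> cell_clamp a h j y"
  unfolding cell_clamp_def by auto

lemma cell_clamp_bounds:
  "h \<ge> 0 \<Longrightarrow> a + real j * h \<le> cell_clamp a h j x \<and> cell_clamp a h j x \<le> a + real j * h + h"
  unfolding cell_clamp_def by (auto simp: algebra_simps)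

lemma sum_cell_clamp_telescope:
  fixes F :: "real \<Rightarrow> 'a::ab_group_add"
  assumes "h \<ge> 0" "a \<le> y" "y \<le> a + real M * h"
  shows "(\<Sum>j<M. F (cell_clamp a h j y) - F (a + real j * h)) = F y - F a"
  using assms(2,3)
proof (induction M)
  case 0
  then show ?case by simp
next
  case (Suc M)
  show ?case
  proof (cases "y \<le> a + real M * h")
    case True
    then have "cell_clamp a h M y = a + real M * h"
      unfolding cell_clamp_def using \<open>h \<ge> 0\<close> by auto
    then show ?thesis using Suc True by simp
  next
    case False
    have "cell_clamp a h j y = a + real (Suc j) * h" if "j < M" for j
    proof -
      have "real (Suc j) * h \<le> real M * h"
        using that \<open>h \<ge> 0\<close> by (intro mult_right_mono) auto
      then show ?thesis
        unfolding cell_clamp_def using False \<open>h \<ge> 0\<close> by (simp add: algebra_simps)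
    qed
    then have "(\<Sum>j<M. F (cell_clamp a h j y) - F (a + real j * h))
        = (\<Sum>j<M. F (a + real (Suc j) * h) - F (a + real j * h))"
      by simp
    also have "\<dots> = F (a + real M * h) - F a"
      by (subst sum_lessThan_telescope) simp
    finally show ?thesis
      using False Suc.prems by (simp add: cell_clamp_def)
  qed
qed

lemma sum_cell_clamp_diff:
  fixes F :: "real \<Rightarrow> 'a::ab_group_add"
  assumes "h \<ge> 0" "x \<in> {a..a + real M * h}" "y \<in> {a..a + real M * h}"
  shows "(\<Sum>j<M. F (cell_clamp a h j y) - F (cell_clamp a h j x)) = F y - F x"
proof -
  have "(\<Sum>j<M. F (cell_clamp a h j y) - F (cell_clamp a h j x)) =
      (\<Sum>j<M. F (cell_clamp a h j y) - F (a + real j * h)) -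
      (\<Sum>j<M. F (cell_clamp a h j x) - F (a + real j * h))"
    by (simp add: sum_subtractf[symmetric])
  then show ?thesis
    using sum_cell_clamp_telescope[of h a y M F] sum_cell_clamp_telescope[of h a x M F] assms
    by simp
qed

lemma abs_cont_onE:
  assumes "abs_cont_on a b f" "e > 0"
  obtains d where "d > 0"
    "\<And>(n::nat) l r. \<forall>i<n. a \<le> l i \<and> l i \<le> r i \<and> r i \<le> b \<Longrightarrow>
       \<forall>i<n. \<forall>j<n. i \<noteq> j \<longrightarrow> r i \<le> l j \<or> r j \<le> l i \<Longrightarrow>
       (\<Sum>i<n. r i - l i) < d \<Longrightarrow> (\<Sum>i<n. norm (f (r i) - f (l i))) < e"
proof -
  obtain d where "d > 0" and d: "\<forall>(n::nat) l r. (\<forall>i<n. a \<le> l i \<and> l i \<le> r i \<and> r i \<le> b) \<and>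
       (\<forall>i<n. \<forall>j<n. i \<noteq> j \<longrightarrow> r i \<le> l j \<or> r j \<le> l i) \<and>
       (\<Sum>i<n. r i - l i) < d \<longrightarrow> (\<Sum>i<n. norm (f (r i) - f (l i))) < e"
    using assms(1)[unfolded abs_cont_on_def, rule_format, OF assms(2)] by blast
  show thesis
    by (rule that[OF \<open>d > 0\<close>]) (use d in auto)
qed

lemma abs_cont_on_imp_continuous_on:
  fixes f :: "real \<Rightarrow> 'a::real_normed_vector"
  assumes "abs_cont_on a b f"
  shows "continuous_on {a..b} f"
  unfolding continuous_on_iff
proof (intro ballI allI impI)
  fix x e :: real assume x: "x \<in> {a..b}" and "e > 0"
  obtain d where "d > 0" and d: "\<And>(n::nat) l r. \<forall>i<n. a \<le> l i \<and> l i \<le> r i \<and> r i \<le> b \<Longrightarrow>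
       \<forall>i<n. \<forall>j<n. i \<noteq> j \<longrightarrow> r i \<le> l j \<or> r j \<le> l i \<Longrightarrow>
       (\<Sum>i<n. r i - l i) < d \<Longrightarrow> (\<Sum>i<n. norm (f (r i) - f (l i))) < e"
    using abs_cont_onE[OF assms \<open>e > 0\<close>] by blast
  show "\<exists>d>0. \<forall>y\<in>{a..b}. dist y x < d \<longrightarrow> dist (f y) (f x) < e"
  proof (intro exI[of _ d] conjI ballI impI \<open>d > 0\<close>)
    fix y assume y: "y \<in> {a..b}" and "dist y x < d"
    then have "norm (f (max x y) - f (min x y)) < e"
      using d[of 1 "\<lambda>_. min x y" "\<lambda>_. max x y"] x by (auto simp: dist_real_def)
    then show "dist (f y) (f x) < e"
      by (cases "x \<le> y") (auto simp: dist_norm norm_minus_commute max_def min_def)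
  qed
qed

lemma lift_Suc_mono_le_bounded:
  fixes t :: "nat \<Rightarrow> 'a::order"
  assumes "\<forall>i<n. t i \<le> t (Suc i)" "i \<le> j" "j \<le> n"
  shows "t i \<le> t j"
  by (rule lift_Suc_mono_le_ivl[of "{..<n}"]) (use assms in auto)

lemma cell_clamp_partition:
  fixes t :: "nat \<Rightarrow> real"
  assumes "h \<ge> 0" "\<forall>i<n. t i \<le> t (Suc i)" "a + real (Suc j) * h \<le> b"
  shows "\<forall>i<n. a \<le> cell_clamp a h j (t i) \<and> cell_clamp a h j (t i) \<le> cell_clamp a h j (t (Suc i)) \<and>
      cell_clamp a h j (t (Suc i)) \<le> b"
    and "\<forall>i<n. \<forall>k<n. i \<noteq> k \<longrightarrow>
      cell_clamp a h j (t (Suc i)) \<le> cell_clamp a h j (t k) \<or> cell_clamp a h j (t (Suc k)) \<le> cell_clamp a h j (t i)"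
    and "(\<Sum>i<n. cell_clamp a h j (t (Suc i)) - cell_clamp a h j (t i)) \<le> h"
proof -
  let ?c = "\<lambda>i. cell_clamp a h j (t i)"
  have "0 \<le> real j * h"
    using \<open>h \<ge> 0\<close> by simp
  show "\<forall>i<n. a \<le> ?c i \<and> ?c i \<le> ?c (Suc i) \<and> ?c (Suc i) \<le> b"
  proof (intro allI impI conjI)
    fix i assume "i < n"
    show "a \<le> ?c i"
      using cell_clamp_bounds[OF \<open>h \<ge> 0\<close>, of a j "t i"] \<open>0 \<le> real j * h\<close> by linarith
    show "?c i \<le> ?c (Suc i)"
      using assms(2) \<open>i < n\<close> by (simp add: cell_clamp_mono[OF \<open>h \<ge> 0\<close>])
    show "?c (Suc i) \<le> b"
      using cell_clamp_bounds[OF \<open>h \<ge> 0\<close>, of a j "t (Suc i)"] assms(3) by (simp add: algebra_simps)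
  qed
  show "\<forall>i<n. \<forall>k<n. i \<noteq> k \<longrightarrow> ?c (Suc i) \<le> ?c k \<or> ?c (Suc k) \<le> ?c i"
  proof (intro allI impI)
    fix i k assume "i < n" "k < n" "i \<noteq> k"
    then have "t (Suc i) \<le> t k \<or> t (Suc k) \<le> t i"
      using lift_Suc_mono_le_bounded[OF assms(2), of "Suc i" k] lift_Suc_mono_le_bounded[OF assms(2), of "Suc k" i]
      by (cases "i < k") auto
    then show "?c (Suc i) \<le> ?c k \<or> ?c (Suc k) \<le> ?c i"
      using cell_clamp_mono[OF \<open>h \<ge> 0\<close>] by blast
  qed
  have "(\<Sum>i<n. ?c (Suc i) - ?c i) = ?c n - ?c 0"
    by (rule sum_lessThan_telescope)
  also have "\<dots> \<le> h"
    using cell_clamp_bounds[OF \<open>h \<ge> 0\<close>, of a j "t n"] cell_clamp_bounds[OF \<open>h \<ge> 0\<close>, of a j "t 0"]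
    by linarith
  finally show "(\<Sum>i<n. ?c (Suc i) - ?c i) \<le> h" .
qed

lemma abs_cont_on_bounded_variation:
  fixes f :: "real \<Rightarrow> 'a::real_normed_vector"
  assumes "abs_cont_on a b f" "a \<le> b"
  obtains B where "\<And>n t. t 0 = a \<Longrightarrow> t n = b \<Longrightarrow> \<forall>i<n. t i \<le> t (Suc i) \<Longrightarrow>
    (\<Sum>i<n. norm (f (t (Suc i)) - f (t i))) \<le> B"
proof -
  obtain d where "d > 0" and d: "\<And>(n::nat) l r. \<forall>i<n. a \<le> l i \<and> l i \<le> r i \<and> r i \<le> b \<Longrightarrow>
       \<forall>i<n. \<forall>j<n. i \<noteq> j \<longrightarrow> r i \<le> l j \<or> r j \<le> l i \<Longrightarrow>
       (\<Sum>i<n. r i - l i) < d \<Longrightarrow> (\<Sum>i<n. norm (f (r i) - f (l i))) < 1"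
    by (rule abs_cont_onE[OF assms(1), of 1]) simp_all
  obtain M :: nat where M: "(b - a) / d < real M"
    using reals_Archimedean2 by blast
  have "0 \<le> (b - a) / d"
    using \<open>d > 0\<close> assms(2) by simp
  then have "real M > 0"
    using M by linarith
  define h where "h = (b - a) / real M"
  have "h \<ge> 0" "h < d" "a + real M * h = b"
    using M \<open>d > 0\<close> \<open>real M > 0\<close> assms(2) by (auto simp: h_def field_simps)
  show thesis
  proof (rule that)
    \<comment> \<open>Cutting every increment at the points of a grid of mesh h < d bounds the variation by
      the number of cells, since within one cell the pieces form a family of disjoint intervals
      of total length at most h.\<close>
    fix n t assume t0: "t 0 = a" and tn: "t n = b" and t_mono: "\<forall>i<n. t i \<le> t (Suc i)"
    have t_range: "t i \<in> {a..a + real M * h}" if "i \<le> n" for i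
      using lift_Suc_mono_le_bounded[OF t_mono, of 0 i] lift_Suc_mono_le_bounded[OF t_mono, of i n]
        that t0 tn \<open>a + real M * h = b\<close> by auto
    let ?c = "\<lambda>j i. cell_clamp a h j (t i)"
    have split: "norm (f (t (Suc i)) - f (t i)) \<le> (\<Sum>j<M. norm (f (?c j (Suc i)) - f (?c j i)))"
      if "i < n" for i
    proof -
      have "f (t (Suc i)) - f (t i) = (\<Sum>j<M. f (?c j (Suc i)) - f (?c j i))"
        using sum_cell_clamp_diff[OF \<open>h \<ge> 0\<close> t_range t_range, of i "Suc i" f] that by simp
      then show ?thesis
        by (metis norm_sum)
    qed
    have cell: "(\<Sum>i<n. norm (f (?c j (Suc i)) - f (?c j i))) < 1" if "j < M" for j
    proof -
      have "real (Suc j) * h \<le> real M * h"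
        using that \<open>h \<ge> 0\<close> by (intro mult_right_mono) auto
      then have "a + real (Suc j) * h \<le> b"
        using \<open>a + real M * h = b\<close> by linarith
      from cell_clamp_partition[OF \<open>h \<ge> 0\<close> t_mono this] show ?thesis
        using \<open>h < d\<close> by (intro d) auto
    qed
    have "(\<Sum>i<n. norm (f (t (Suc i)) - f (t i))) \<le> (\<Sum>i<n. \<Sum>j<M. norm (f (?c j (Suc i)) - f (?c j i)))"
      using split by (intro sum_mono) auto
    also have "\<dots> = (\<Sum>j<M. \<Sum>i<n. norm (f (?c j (Suc i)) - f (?c j i)))"
      by (rule sum.swap)
    also have "\<dots> \<le> (\<Sum>j<M. 1)"
      using cell by (intro sum_mono) (auto intro: less_imp_le)
    finally show "(\<Sum>i<n. norm (f (t (Suc i)) - f (t i))) \<le> real M"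
      by simp
  qed
qed

lemma polygon_length_le_curve_length:
  fixes f :: "real \<Rightarrow> 'a::real_normed_vector"
  assumes "abs_cont_on a b f" "t 0 = a" "t n = b" "\<forall>i<n. t i \<le> t (Suc i)"
  shows "(\<Sum>i<n. norm (f (t (Suc i)) - f (t i))) \<le> curve_length a b f"
proof -
  have "a \<le> b"
    using lift_Suc_mono_le_bounded[OF assms(4), of 0 n] assms(2,3) by simp
  then obtain B where B: "\<And>n t. t 0 = a \<Longrightarrow> t n = b \<Longrightarrow> \<forall>i<n. t i \<le> t (Suc i) \<Longrightarrow>
      (\<Sum>i<n. norm (f (t (Suc i)) - f (t i))) \<le> B"
    using abs_cont_on_bounded_variation[OF assms(1)] by blast
  show ?thesis
    unfolding curve_length_def
    by (rule cSup_upper) (use assms(2-4) B in \<open>auto intro!: bdd_aboveI[of _ B]\<close>)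
qed

section \<open>Level partitions and increments along segments\<close>

lemma continuous_on_level_partition:
  fixes f :: "'a::linear_continuum_topology \<Rightarrow> 'b::linorder_topology" and lev :: "nat \<Rightarrow> 'b"
  assumes "continuous_on {a..b} f" "a \<le> b" "mono lev" "f a = lev 0" "f b = lev n" "n > 0"
  shows "\<exists>t. t 0 = a \<and> t n = b \<and> (\<forall>i<n. t i \<le> t (Suc i)) \<and> (\<forall>k\<le>n. f (t k) = lev k)"
  using assms
proof (induction n arbitrary: b)
  case 0
  then show ?case by simp
next
  case (Suc n)
  show ?case
  proof (cases "n = 0")
    case True
    then show ?thesis
      using Suc.prems by (intro exI[of _ "\<lambda>k. if k = 0 then a else b"]) (auto simp: le_Suc_eq)
  next
    case False
    have "f a \<le> lev n" "lev n \<le> f b"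
      using monoD[OF \<open>mono lev\<close>, of 0 n] monoD[OF \<open>mono lev\<close>, of n "Suc n"] Suc.prems by auto
    then obtain c where c: "a \<le> c" "c \<le> b" "f c = lev n"
      using IVT'[of f a "lev n" b] Suc.prems by blast
    have "continuous_on {a..c} f"
      by (rule continuous_on_subset[OF \<open>continuous_on {a..b} f\<close>]) (use c in auto)
    then obtain t where t: "t 0 = a" "t n = c" "\<forall>i<n. t i \<le> t (Suc i)" "\<forall>k\<le>n. f (t k) = lev k"
      using Suc.IH[of c] Suc.prems c False by blast
    show ?thesis
      using t c Suc.prems by (intro exI[of _ "t(Suc n := b)"]) (auto simp: less_Suc_eq le_Suc_eq)
  qed
qed

lemma continuous_on_grid_oscillation:
  fixes f :: "real \<Rightarrow> 'a::metric_space"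
  assumes "continuous_on {a..b} f" "a \<le> b" "\<eta> > 0"
  obtains N :: nat where "N > 0"
    "\<And>k. k < N \<Longrightarrow>
      dist (f (a + real (Suc k) * (b - a) / real N)) (f (a + real k * (b - a) / real N)) < \<eta>"
proof -
  obtain d where "d > 0"
    and d: "\<And>x x'. x \<in> {a..b} \<Longrightarrow> x' \<in> {a..b} \<Longrightarrow> dist x' x < d \<Longrightarrow> dist (f x') (f x) < \<eta>"
    using compact_uniformly_continuous[OF assms(1) compact_Icc] \<open>\<eta> > 0\<close>
    unfolding uniformly_continuous_on_def by metis
  obtain N :: nat where N: "(b - a) / d < real N"
    using reals_Archimedean2 by blast
  have "0 \<le> (b - a) / d"
    using \<open>d > 0\<close> assms(2) by simp
  then have "real N > 0"
    using N by linarith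
  have grid: "a + real k * (b - a) / real N \<in> {a..b}" if "k \<le> N" for k
  proof -
    have "real k * (b - a) \<le> real N * (b - a)"
      using that assms(2) by (intro mult_right_mono) auto
    then have "real k * (b - a) / real N \<le> b - a"
      using \<open>real N > 0\<close> by (simp add: divide_le_eq mult.commute)
    moreover have "0 \<le> real k * (b - a) / real N"
      using assms(2) by simp
    ultimately show ?thesis
      by simp
  qed
  show thesis
  proof (rule that)
    show "N > 0"
      using \<open>real N > 0\<close> by simp
    fix k assume "k < N"
    have "real (Suc k) * (b - a) / real N = real k * (b - a) / real N + (b - a) / real N"
      by (simp add: distrib_right add_divide_distrib)
    then have "dist (a + real (Suc k) * (b - a) / real N) (a + real k * (b - a) / real N) = (b - a) / real N"
      using assms(2) by (simp add: dist_real_def)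
    also have "\<dots> < d"
      using N \<open>d > 0\<close> \<open>real N > 0\<close> by (simp add: field_simps)
    finally show
      "dist (f (a + real (Suc k) * (b - a) / real N)) (f (a + real k * (b - a) / real N)) < \<eta>"
      using \<open>k < N\<close> by (intro d grid) auto
  qed
qed

lemma increment_le_of_derivative_le:
  fixes h :: "real \<Rightarrow> real"
  assumes "a \<le> b" "continuous_on {a..b} h"
    and "\<And>x. x \<in> {a<..<b} \<Longrightarrow> (h has_real_derivative h' x) (at x)"
    and "\<And>x. x \<in> {a<..<b} \<Longrightarrow> h' x \<le> L"
  shows "h b - h a \<le> L * (b - a)"
proof -
  have "L * a - h a \<le> L * b - h b"
  proof (rule DERIV_nonneg_imp_increasing_open[OF \<open>a \<le> b\<close>])
    fix x :: real assume "a < x" "x < b"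
    then have "((\<lambda>x. L * x - h x) has_real_derivative L * 1 - h' x) (at x)" "L * 1 - h' x \<ge> 0"
      using assms(3,4) by (auto intro!: DERIV_diff DERIV_cmult DERIV_ident)
    then show "\<exists>D. ((\<lambda>x. L * x - h x) has_real_derivative D) (at x) \<and> D \<ge> 0"
      by blast
  next
    show "continuous_on {a..b} (\<lambda>x. L * x - h x)"
      using assms(2) by (intro continuous_intros)
  qed
  then show ?thesis
    by (simp add: algebra_simps)
qed

lemma affine_in_x_increment_le_norm:
  fixes A B A' B' :: "real \<Rightarrow> real"
  assumes "y < y'"
    and "continuous_on {y..y'} A" "continuous_on {y..y'} B"
    and A': "\<And>Y. Y \<in> {y<..<y'} \<Longrightarrow> (A has_real_derivative A' Y) (at Y)"
    and B': "\<And>Y. Y \<in> {y<..<y'} \<Longrightarrow> (B has_real_derivative B' Y) (at Y)"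
    and gradient: "\<And>Y X. Y \<in> {y<..<y'} \<Longrightarrow> X \<in> {min x x'..max x x'} \<Longrightarrow>
      (B Y)\<^sup>2 + (A' Y + B' Y * X)\<^sup>2 \<le> 1"
  shows "(A y' + B y' * x') - (A y + B y * x) \<le> norm ((x', y') - (x, y))"
proof -
  \<comment> \<open>(B Y, A' Y + B' Y * X) is the gradient of (X, Y) \<mapsto> A Y + B Y * X.\<close>
  define e d where "e = x' - x" and "d = y' - y"
  define Y X where "Y l = y + l * d" and "X l = x + l * e" for l
  define h where "h l = A (Y l) + B (Y l) * X l" for l
  define h' where "h' l = B (Y l) * e + (A' (Y l) + B' (Y l) * X l) * d" for l
  define L where "L = norm ((x', y') - (x, y))"
  have "d > 0"
    using \<open>y < y'\<close> by (simp add: d_def)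
  have Y_mem: "Y l \<in> {y<..<y'}" if "l \<in> {0<..<1}" for l
  proof -
    have "0 < l * d" "l * d < d"
      using that \<open>d > 0\<close> mult_strict_right_mono[of l 1 d] by auto
    then show ?thesis
      by (simp add: Y_def d_def)
  qed
  have X_mem: "X l \<in> {min x x'..max x x'}" if "l \<in> {0<..<1}" for l
  proof -
    have "X l = (1 - l) * x + l * x'"
      by (simp add: X_def e_def algebra_simps)
    then show ?thesis
      using that convex_bound_le[of x "max x x'" x' "1 - l" l] convex_bound_le[of "-x" "- min x x'" "-x'" "1 - l" l]
      by auto
  qed
  have "Y l \<in> {y..y'}" if "l \<in> {0..1}" for l
  proof -
    have "0 \<le> l * d" "l * d \<le> d"
      using that \<open>d > 0\<close> mult_left_le_one_le[of d l] by auto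
    then show ?thesis
      by (simp add: Y_def d_def)
  qed
  then have Y_image: "Y ` {0..1} \<subseteq> {y..y'}"
    by auto
  have Y_cont: "continuous_on {0..1} Y"
    unfolding Y_def by (intro continuous_intros)
  have h_cont: "continuous_on {0..1} h"
    unfolding h_def X_def
    by (intro continuous_intros continuous_on_compose2[OF assms(2) Y_cont Y_image]
        continuous_on_compose2[OF assms(3) Y_cont Y_image])
  have h_deriv: "(h has_real_derivative h' l) (at l)" if "l \<in> {0<..<1}" for l
  proof -
    have Y_deriv: "(Y has_real_derivative d) (at l)" and X_deriv: "(X has_real_derivative e) (at l)"
      unfolding Y_def X_def by (auto intro!: derivative_eq_intros)
    have "(h has_real_derivative A' (Y l) * d + (B' (Y l) * d * X l + e * B (Y l))) (at l)"
      unfolding h_def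
      by (intro DERIV_add DERIV_mult X_deriv DERIV_chain2[OF A'[OF Y_mem[OF that]] Y_deriv]
          DERIV_chain2[OF B'[OF Y_mem[OF that]] Y_deriv])
    then show ?thesis
      by (rule DERIV_cong) (simp add: h'_def algebra_simps)
  qed
  have h'_le: "h' l \<le> L" if "l \<in> {0<..<1}" for l
  proof -
    let ?G = "A' (Y l) + B' (Y l) * X l"
    have "norm (B (Y l), ?G) \<le> 1"
      using gradient[OF Y_mem[OF that] X_mem[OF that]] by (simp add: norm_Pair)
    moreover have "norm (e, d) = L"
      by (simp add: L_def e_def d_def)
    moreover have "h' l = inner (B (Y l), ?G) (e, d)"
      by (simp add: h'_def)
    moreover note norm_cauchy_schwarz[of "(B (Y l), ?G)" "(e, d)"]
    ultimately show ?thesis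
      using mult_left_le_one_le[of L "norm (B (Y l), ?G)"] by auto
  qed
  have "h 1 - h 0 \<le> L * (1 - 0)"
    by (rule increment_le_of_derivative_le[OF _ h_cont h_deriv h'_le]) simp
  then show ?thesis
    by (simp add: h_def Y_def X_def L_def d_def e_def)
qed

section \<open>The profile x = y^q\<close>

(* The profile x = y^q has unit tangent (profile_tilt q y, 1 / profile_speed q y); profile_tilt and
   profile_arclength are the functions beta and l of the proof idea. *)

definition profile_slope :: "real \<Rightarrow> real \<Rightarrow> real" where
  "profile_slope q y = q * y powr (q - 1)"

definition profile_speed :: "real \<Rightarrow> real \<Rightarrow> real" where
  "profile_speed q y = sqrt (1 + (profile_slope q y)\<^sup>2)"

definition profile_arclength :: "real \<Rightarrow> real \<Rightarrow> real" where
  "profile_arclength q y = integral {0..y} (profile_speed q)"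

definition profile_tilt :: "real \<Rightarrow> real \<Rightarrow> real" where
  "profile_tilt q y = profile_slope q y / profile_speed q y"

definition profile_tilt' :: "real \<Rightarrow> real \<Rightarrow> real" where
  "profile_tilt' q y = q * (q - 1) * y powr (q - 2) / profile_speed q y ^ 3"

lemma profile_speed_ge_1: "profile_speed q y \<ge> 1"
  by (simp add: profile_speed_def)

lemma profile_speed_pos: "profile_speed q y > 0"
  using profile_speed_ge_1 less_le_trans zero_less_one by blast

lemma profile_speed_nonzero [simp]: "profile_speed q y \<noteq> 0"
  using profile_speed_pos[of q y] by simp

lemma profile_speed_sq: "(profile_speed q y)\<^sup>2 = 1 + (profile_slope q y)\<^sup>2"
  by (simp add: profile_speed_def add_pos_nonneg)

lemma profile_tilt_sq: "(profile_tilt q y)\<^sup>2 + (1 / profile_speed q y)\<^sup>2 = 1"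
proof -
  have "(profile_tilt q y)\<^sup>2 + (1 / profile_speed q y)\<^sup>2 =
      ((profile_slope q y)\<^sup>2 + 1) / (profile_speed q y)\<^sup>2"
    by (simp add: profile_tilt_def power_divide add_divide_distrib)
  moreover have "1 + (profile_slope q y)\<^sup>2 \<noteq> 0"
    by (metis add_pos_nonneg zero_le_power2 zero_less_one less_irrefl)
  ultimately show ?thesis
    by (simp add: profile_speed_sq)
qed

lemma profile_tilt_le_1: "profile_tilt q y \<le> 1"
proof (rule power2_le_imp_le)
  show "(profile_tilt q y)\<^sup>2 \<le> 1\<^sup>2"
    using profile_tilt_sq[of q y] zero_le_power2[of "1 / profile_speed q y"]
    unfolding power_one by linarith
qed simp

lemma profile_tilt_0: "q > 1 \<Longrightarrow> profile_tilt q 0 = 0"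
  by (simp add: profile_tilt_def profile_slope_def)

lemma profile_arclength_0: "profile_arclength q 0 = 0"
  by (simp add: profile_arclength_def)

lemma profile_tilt'_bounds:
  assumes "q \<ge> 1"
  shows "0 \<le> profile_tilt' q y" "profile_tilt' q y \<le> q * (q - 1) * y powr (q - 2)"
proof -
  have nonneg: "0 \<le> q * (q - 1) * y powr (q - 2)"
    using assms by simp
  have speed3: "1 \<le> profile_speed q y ^ 3" "0 < profile_speed q y ^ 3"
    using profile_speed_ge_1[of q y] profile_speed_pos[of q y] by (auto simp: one_le_power)
  show "0 \<le> profile_tilt' q y"
    unfolding profile_tilt'_def using nonneg speed3 by simp
  show "profile_tilt' q y \<le> q * (q - 1) * y powr (q - 2)"
    unfolding profile_tilt'_def using divide_left_mono[OF speed3(1) nonneg] speed3 by simp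
qed

lemma has_real_derivative_profile_slope:
  "y > 0 \<Longrightarrow> (profile_slope q has_real_derivative q * (q - 1) * y powr (q - 2)) (at y)"
  unfolding profile_slope_def[abs_def]
  by (auto intro!: derivative_eq_intros simp: algebra_simps)

lemma has_real_derivative_profile_speed:
  assumes "y > 0"
  shows "(profile_speed q has_real_derivative
    profile_slope q y * (q * (q - 1) * y powr (q - 2)) / profile_speed q y) (at y)"
proof -
  have "((\<lambda>y. sqrt (1 + (profile_slope q y)\<^sup>2)) has_real_derivative
      inverse (sqrt (1 + (profile_slope q y)\<^sup>2)) / 2 * (2 * profile_slope q y * (q * (q - 1) * y powr (q - 2)))) (at y)"
    by (rule DERIV_chain2[OF DERIV_real_sqrt])
      (auto intro!: derivative_eq_intros has_real_derivative_profile_slope[OF assms] add_pos_nonneg)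
  then show ?thesis
    unfolding profile_speed_def[abs_def] by (simp add: divide_simps mult.assoc)
qed

lemma has_real_derivative_profile_tilt:
  assumes "y > 0"
  shows "(profile_tilt q has_real_derivative profile_tilt' q y) (at y)"
proof -
  define D S w where "D = q * (q - 1) * y powr (q - 2)" and "S = profile_speed q y"
    and "w = profile_slope q y"
  have "S > 0" "S\<^sup>2 = 1 + w\<^sup>2"
    using profile_speed_pos profile_speed_sq by (simp_all add: S_def w_def)
  have "(profile_tilt q has_real_derivative (D * S - w * (w * D / S)) / (S * S)) (at y)"
    unfolding profile_tilt_def[abs_def] D_def S_def w_def
    by (intro DERIV_divide has_real_derivative_profile_slope has_real_derivative_profile_speed assms)
      (use profile_speed_pos[of q y] in simp)
  also have "(D * S - w * (w * D / S)) / (S * S) = D * (S\<^sup>2 - w\<^sup>2) / S ^ 3"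
    using \<open>S > 0\<close> by (simp add: field_simps power2_eq_square power3_eq_cube)
  also have "\<dots> = profile_tilt' q y"
    using \<open>S\<^sup>2 = 1 + w\<^sup>2\<close> by (simp add: profile_tilt'_def D_def S_def)
  finally show ?thesis .
qed

lemma continuous_on_profile_speed: "q > 1 \<Longrightarrow> continuous_on {0..} (profile_speed q)"
  unfolding profile_speed_def[abs_def] profile_slope_def
  by (intro continuous_intros continuous_on_powr') auto

lemma continuous_on_profile_tilt: "q > 1 \<Longrightarrow> continuous_on {0..} (profile_tilt q)"
  unfolding profile_tilt_def[abs_def] profile_slope_def
  by (intro continuous_intros continuous_on_profile_speed continuous_on_powr') auto

lemma continuous_on_profile_arclength: "q > 1 \<Longrightarrow> continuous_on {0..T} (profile_arclength q)"
  unfolding profile_arclength_def[abs_def]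
  by (intro indefinite_integral_continuous_1 integrable_continuous_real
      continuous_on_subset[OF continuous_on_profile_speed]) auto

lemma has_real_derivative_profile_arclength:
  assumes "q > 1" "y > 0"
  shows "(profile_arclength q has_real_derivative profile_speed q y) (at y)"
proof -
  have "(profile_arclength q has_real_derivative profile_speed q y) (at y within {0..y + 1})"
    unfolding profile_arclength_def[abs_def]
    by (rule integral_has_real_derivative)
      (use continuous_on_subset[OF continuous_on_profile_speed[OF \<open>q > 1\<close>]] assms in auto)
  moreover have "at y within {0..y + 1} = at y"
    by (rule at_within_Icc_at) (use assms in auto)
  ultimately show ?thesis
    by simp
qed

lemma L_SR_eq_profile_arclength:
  assumes "b \<ge> 3"
  shows "L_SR b s \<epsilon> = s + profile_arclength (real b / 2) \<epsilon>"
proof -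
  have "profile_speed (real b / 2) t = sqrt (1 + (real b / 2)\<^sup>2 * t powr (2 * (real b / 2) - 2))"
    if "t \<ge> 0" for t
  proof (cases "t = 0")
    case True
    then show ?thesis
      using assms by (simp add: profile_speed_def profile_slope_def)
  next
    case False
    have "t powr (real b / 2 - 1) * t powr (real b / 2 - 1) = t powr (2 * (real b / 2) - 2)"
      by (simp flip: powr_add)
    then show ?thesis
      by (simp add: profile_speed_def profile_slope_def power2_eq_square algebra_simps)
  qed
  then have "integral {0..\<epsilon>} (\<lambda>t. sqrt (1 + (real b / 2)\<^sup>2 * t powr (2 * (real b / 2) - 2))) =
      profile_arclength (real b / 2) \<epsilon>"
    unfolding profile_arclength_def by (intro integral_cong) auto
  then show ?thesis
    unfolding L_SR_def by simp
qed

section \<open>The calibration\<close>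

lemma powr_mult_square_le_max:
  fixes Y z q :: real
  assumes "Y > 0" "z > 0" "q \<ge> 2"
  shows "Y powr (q - 2) * (Y + z)\<^sup>2 \<le> 4 * max (Y powr q) (z powr q)"
proof -
  define m where "m = max Y z"
  have "m > 0"
    using assms by (simp add: m_def)
  have "Y powr (q - 2) * (Y + z)\<^sup>2 \<le> m powr (q - 2) * (2 * m)\<^sup>2"
    using assms by (intro mult_mono powr_mono2 power_mono) (auto simp: m_def)
  also have "\<dots> = 4 * (m powr (q - 2) * m powr 2)"
    using \<open>m > 0\<close> by (simp add: power_mult_distrib)
  also have "\<dots> = 4 * m powr q"
    by (simp flip: powr_add)
  also have "m powr q = max (Y powr q) (z powr q)"
    using assms powr_mono2[of q Y z] powr_mono2[of q z Y] by (auto simp: m_def max_def)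
  finally show ?thesis .
qed

lemma profile_tilt'_mul_gap_le:
  fixes b :: nat
  assumes q_def: "q = real b / 2" and "b \<ge> 4" "\<zeta> > 0" "Y > 0"
  shows "profile_tilt' q Y * (sqrt (\<zeta> + Y ^ b) - Y powr q)
    \<le> 4 * q * (q - 1) * \<zeta> / (Y + \<zeta> powr (1 / real b))\<^sup>2"
proof -
  define F g z where "F = sqrt (\<zeta> + Y ^ b)" and "g = Y powr q" and "z = \<zeta> powr (1 / real b)"
  have "q \<ge> 2" "z > 0"
    using assms by (auto simp: q_def z_def)
  have g_eq: "g = sqrt (Y ^ b)"
    using assms by (simp add: g_def q_def powr_half_sqrt_powr powr_realpow)
  have z_pow: "z powr q = sqrt \<zeta>"
    using assms by (simp add: z_def q_def powr_powr powr_half_sqrt)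
  have "0 \<le> g" "g \<le> F" "sqrt \<zeta> \<le> F"
    using assms by (simp_all add: g_eq F_def)
  moreover have "sqrt \<zeta> > 0"
    using \<open>\<zeta> > 0\<close> by simp
  ultimately have "F + g > 0"
    by linarith
  have "(F - g) * (F + g) = \<zeta>"
    using assms by (simp add: F_def g_eq algebra_simps flip: power2_eq_square)
  then have gap: "F - g = \<zeta> / (F + g)"
    using \<open>F + g > 0\<close> by (simp add: eq_divide_eq)
  have "Y powr (q - 2) * (Y + z)\<^sup>2 \<le> 4 * max g (sqrt \<zeta>)"
    using powr_mult_square_le_max[OF \<open>Y > 0\<close> \<open>z > 0\<close> \<open>q \<ge> 2\<close>] by (simp add: g_def z_pow)
  also have "\<dots> \<le> 4 * (F + g)"
    using \<open>0 \<le> g\<close> \<open>g \<le> F\<close> \<open>sqrt \<zeta> \<le> F\<close> by simp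
  finally have key: "Y powr (q - 2) / (F + g) \<le> 4 / (Y + z)\<^sup>2"
    using \<open>F + g > 0\<close> \<open>Y > 0\<close> \<open>z > 0\<close> by (simp add: field_simps)
  have "profile_tilt' q Y * (F - g) \<le> q * (q - 1) * Y powr (q - 2) * (F - g)"
    using profile_tilt'_bounds[of q Y] \<open>q \<ge> 2\<close> \<open>g \<le> F\<close> by (intro mult_right_mono) auto
  also have "\<dots> = q * (q - 1) * \<zeta> * (Y powr (q - 2) / (F + g))"
    by (simp add: gap)
  also have "\<dots> \<le> q * (q - 1) * \<zeta> * (4 / (Y + z)\<^sup>2)"
    using key \<open>q \<ge> 2\<close> \<open>\<zeta> > 0\<close> by (intro mult_left_mono) auto
  finally show ?thesis
    by (simp add: F_def g_def z_def mult_ac)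
qed

lemma profile_bounds_small_scale:
  assumes "q \<ge> 2" "0 < Y" "Y \<le> \<epsilon>" "\<epsilon> \<le> 1" "q * (q - 1) * \<epsilon> powr (q - 2) \<le> 1 / 4"
  shows "profile_tilt' q Y \<le> 1 / 4" "profile_speed q Y \<le> 2"
proof -
  have "q * (q - 1) * Y powr (q - 2) \<le> q * (q - 1) * \<epsilon> powr (q - 2)"
    using assms by (intro mult_left_mono powr_mono2) auto
  then have small: "q * (q - 1) * Y powr (q - 2) \<le> 1 / 4"
    using assms(5) by linarith
  then show "profile_tilt' q Y \<le> 1 / 4"
    using profile_tilt'_bounds[of q Y] assms(1) by linarith
  have "Y powr (q - 1) \<le> Y powr (q - 2)"
    using assms by (intro powr_mono') auto
  then have "profile_slope q Y \<le> q * (q - 1) * Y powr (q - 2)"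
    unfolding profile_slope_def using assms(1)
    by (intro mult_mono) auto
  moreover have "0 \<le> profile_slope q Y"
    using assms by (simp add: profile_slope_def)
  ultimately have "(profile_slope q Y)\<^sup>2 \<le> (1 / 4)\<^sup>2"
    using small by (intro power_mono) auto
  then have "profile_speed q Y \<le> sqrt (2\<^sup>2)"
    unfolding profile_speed_def by (intro real_sqrt_le_mono) (simp add: power2_eq_square)
  then show "profile_speed q Y \<le> 2"
    by simp
qed

definition calibration :: "real \<Rightarrow> real \<Rightarrow> real \<Rightarrow> real \<Rightarrow> real \<times> real \<Rightarrow> real" where
  "calibration q \<delta> z \<eta> p = profile_arclength q (snd p)
     + profile_tilt q (snd p) * (fst p - snd p powr q - \<eta>) + \<delta> / (snd p + z)"

lemma calibration_increment_le_norm: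
  assumes "q > 1" "z > 0" "0 \<le> y" "y < y'"
    and y_slope: "\<And>Y X. Y \<in> {y<..<y'} \<Longrightarrow> X \<in> {min x x'..max x x'} \<Longrightarrow>
      \<bar>1 / profile_speed q Y + profile_tilt' q Y * (X - Y powr q - \<eta>) - \<delta> / (Y + z)\<^sup>2\<bar>
        \<le> 1 / profile_speed q Y"
  shows "calibration q \<delta> z \<eta> (x', y') - calibration q \<delta> z \<eta> (x, y) \<le> norm ((x', y') - (x, y))"
proof -
  define A where "A Y = profile_arclength q Y - profile_tilt q Y * (Y powr q + \<eta>) + \<delta> / (Y + z)" for Y
  define A' where "A' Y = 1 / profile_speed q Y - profile_tilt' q Y * (Y powr q + \<eta>) - \<delta> / (Y + z)\<^sup>2"
    for Y
  have calibration_eq: "calibration q \<delta> z \<eta> (X, Y) = A Y + profile_tilt q Y * X" for X Y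
    by (simp add: calibration_def A_def algebra_simps)
  have "A y' + profile_tilt q y' * x' - (A y + profile_tilt q y * x) \<le> norm ((x', y') - (x, y))"
  proof (rule affine_in_x_increment_le_norm[where A' = A' and B' = "profile_tilt' q"])
    have "{y..y'} \<subseteq> {0..}" "{y..y'} \<subseteq> {0..y'}"
      using \<open>0 \<le> y\<close> by auto
    then show "continuous_on {y..y'} A" "continuous_on {y..y'} (profile_tilt q)"
      unfolding A_def using assms(1-3)
      by (auto intro!: continuous_intros continuous_on_powr' intro: continuous_on_subset
          continuous_on_profile_arclength continuous_on_profile_tilt)
  next
    fix Y assume "Y \<in> {y<..<y'}"
    then have "Y > 0" "Y + z \<noteq> 0"
      using assms by auto
    show "(profile_tilt q has_real_derivative profile_tilt' q Y) (at Y)"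
      by (rule has_real_derivative_profile_tilt[OF \<open>Y > 0\<close>])
    have A_deriv: "(A has_real_derivative profile_speed q Y
        - (profile_tilt' q Y * (Y powr q + \<eta>) + profile_slope q Y * profile_tilt q Y)
        - \<delta> / (Y + z)\<^sup>2) (at Y)"
      unfolding A_def using \<open>Y > 0\<close> \<open>Y + z \<noteq> 0\<close> \<open>q > 1\<close>
      by (auto intro!: derivative_eq_intros has_real_derivative_profile_arclength
          has_real_derivative_profile_tilt simp: profile_slope_def power2_eq_square field_simps)
    have "profile_speed q Y - profile_slope q Y * profile_tilt q Y = 1 / profile_speed q Y"
      using profile_speed_sq[of q Y] by (simp add: profile_tilt_def field_simps power2_eq_square)
    then show "(A has_real_derivative A' Y) (at Y)"
      by (intro DERIV_cong[OF A_deriv]) (simp add: A'_def)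
    fix X assume "X \<in> {min x x'..max x x'}"
    then have "\<bar>A' Y + profile_tilt' q Y * X\<bar> \<le> 1 / profile_speed q Y"
      using y_slope[OF \<open>Y \<in> {y<..<y'}\<close>] by (simp add: A'_def algebra_simps)
    then have "(A' Y + profile_tilt' q Y * X)\<^sup>2 \<le> (1 / profile_speed q Y)\<^sup>2"
      by (metis abs_le_square_iff abs_of_pos profile_speed_pos zero_less_divide_1_iff)
    then show "(profile_tilt q Y)\<^sup>2 + (A' Y + profile_tilt' q Y * X)\<^sup>2 \<le> 1"
      using profile_tilt_sq[of q Y] by linarith
  qed fact
  then show ?thesis
    by (simp add: calibration_eq)
qed

lemma calibration_height_0: "q > 1 \<Longrightarrow> calibration q \<delta> z \<eta> (x, 0) = \<delta> / z"
  by (simp add: calibration_def profile_tilt_0 profile_arclength_0)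

lemma calibration_on_profile_ge:
  assumes "0 \<le> \<eta>" "0 \<le> \<delta>" "\<epsilon> + z > 0"
  shows "profile_arclength q \<epsilon> - \<eta> \<le> calibration q \<delta> z \<eta> (\<epsilon> powr q, \<epsilon>)"
proof -
  have "profile_tilt q \<epsilon> * \<eta> \<le> \<eta>"
    using mult_right_mono[OF profile_tilt_le_1 \<open>0 \<le> \<eta>\<close>] by simp
  moreover have "0 \<le> \<delta> / (\<epsilon> + z)"
    using assms by simp
  ultimately show ?thesis
    by (simp add: calibration_def)
qed

lemma mem_DzetaD:
  assumes "(x, y) \<in> Dzeta b \<zeta>" "0 \<le> y"
  shows "0 \<le> x" "x \<le> sqrt (\<zeta> + y ^ b)"
  using assms by (auto simp: Dzeta_def Ptilde_def P_def intro: real_le_rsqrt)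

lemma calibration_increment_le_norm_Dzeta:
  fixes b :: nat
  assumes q_def: "q = real b / 2" and \<delta>_def: "\<delta> = 4 * q * (q - 1) * \<zeta>" and z_def: "z = \<zeta> powr (1 / real b)"
    and "b \<ge> 4" "\<zeta> > 0" "0 \<le> \<eta>" "\<eta> \<le> 1"
    and "\<epsilon> \<le> 1" and small_\<epsilon>: "q * (q - 1) * \<epsilon> powr (q - 2) \<le> 1 / 4"
    and small_\<zeta>: "\<delta> / z\<^sup>2 \<le> 1 / 2"
    and "0 \<le> y" "y < y'" "y' \<le> \<epsilon>"
    and oscillation: "sqrt (\<zeta> + y' ^ b) \<le> sqrt (\<zeta> + y ^ b) + \<eta>"
    and in_D: "(x, y) \<in> Dzeta b \<zeta>" and in_D': "(x', y') \<in> Dzeta b \<zeta>"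
  shows "calibration q \<delta> z \<eta> (x', y') - calibration q \<delta> z \<eta> (x, y) \<le> norm ((x', y') - (x, y))"
proof (rule calibration_increment_le_norm)
  show "q > 1" "z > 0" "0 \<le> y" "y < y'"
    using assms by (auto simp: q_def z_def)
  fix Y X assume Y: "Y \<in> {y<..<y'}" and X: "X \<in> {min x x'..max x x'}"
  define F r T where "F = sqrt (\<zeta> + Y ^ b)" and "r = 1 / profile_speed q Y" and "T = profile_tilt' q Y"
  have "Y > 0" "Y \<le> \<epsilon>"
    using Y assms by auto
  have "q \<ge> 2" "z > 0"
    using assms by (auto simp: q_def z_def)
  have "sqrt (\<zeta> + y ^ b) \<le> F"
    using Y \<open>0 \<le> y\<close> unfolding F_def by (intro real_sqrt_le_mono add_left_mono power_mono) auto
  then have "0 \<le> X" "X \<le> F + \<eta>"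
    using X mem_DzetaD[OF in_D] mem_DzetaD[OF in_D'] oscillation \<open>0 \<le> \<eta>\<close> \<open>0 \<le> y\<close> \<open>y < y'\<close>
    by auto
  have "0 \<le> T" "T \<le> 1 / 4" "profile_speed q Y \<le> 2"
    using profile_tilt'_bounds[of q Y] profile_bounds_small_scale[OF \<open>q \<ge> 2\<close> \<open>Y > 0\<close> \<open>Y \<le> \<epsilon>\<close> \<open>\<epsilon> \<le> 1\<close> small_\<epsilon>]
      \<open>q \<ge> 2\<close> by (simp_all add: T_def)
  then have "1 \<le> 2 * r"
    using profile_speed_pos[of q Y] by (simp add: r_def field_simps)
  have "Y powr q \<le> 1"
    using \<open>Y > 0\<close> \<open>Y \<le> \<epsilon>\<close> \<open>\<epsilon> \<le> 1\<close> \<open>q \<ge> 2\<close> by (intro powr_le1) auto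
  have gap: "T * (F - Y powr q) \<le> \<delta> / (Y + z)\<^sup>2"
    using profile_tilt'_mul_gap_le[OF q_def \<open>b \<ge> 4\<close> \<open>\<zeta> > 0\<close> \<open>Y > 0\<close>]
    by (simp add: T_def F_def \<delta>_def z_def)
  have "\<delta> / (Y + z)\<^sup>2 \<le> \<delta> / z\<^sup>2"
    using \<open>Y > 0\<close> \<open>z > 0\<close> \<open>\<zeta> > 0\<close> \<open>q \<ge> 2\<close>
    by (intro divide_left_mono power_mono) (auto simp: \<delta>_def)
  then have correction: "0 \<le> \<delta> / (Y + z)\<^sup>2" "\<delta> / (Y + z)\<^sup>2 \<le> 1 / 2"
    using small_\<zeta> \<open>\<zeta> > 0\<close> \<open>q \<ge> 2\<close> by (auto simp: \<delta>_def)
  have "T * (X - Y powr q - \<eta>) \<le> T * (F - Y powr q)"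
    using \<open>0 \<le> T\<close> \<open>X \<le> F + \<eta>\<close> by (intro mult_left_mono) auto
  moreover have "T * (Y powr q + \<eta>) \<le> 1 / 4 * 2"
    using \<open>0 \<le> T\<close> \<open>T \<le> 1 / 4\<close> \<open>Y powr q \<le> 1\<close> \<open>\<eta> \<le> 1\<close> \<open>0 \<le> \<eta>\<close>
    by (intro mult_mono) auto
  moreover have "T * (X - Y powr q - \<eta>) = T * X - T * (Y powr q + \<eta>)" "0 \<le> T * X"
    using \<open>0 \<le> T\<close> \<open>0 \<le> X\<close> by (auto simp: algebra_simps)
  \<comment> \<open>Upper bound: X - \<eta> \<le> F and the gap estimate. Lower bound: the terms subtracted from r
    add up to at most 1 \<le> 2 r.\<close>
  ultimately show "\<bar>1 / profile_speed q Y + profile_tilt' q Y * (X - Y powr q - \<eta>) - \<delta> / (Y + z)\<^sup>2\<bar>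
      \<le> 1 / profile_speed q Y"
    using gap correction \<open>1 \<le> 2 * r\<close> unfolding T_def[symmetric] r_def[symmetric] by linarith
qed

lemma polygon_length_ge_calibration:
  fixes b :: nat and p :: "nat \<Rightarrow> real \<times> real" and lev :: "nat \<Rightarrow> real"
  assumes q_def: "q = real b / 2" and \<delta>_def: "\<delta> = 4 * q * (q - 1) * \<zeta>" and z_def: "z = \<zeta> powr (1 / real b)"
    and "b \<ge> 4" "\<zeta> > 0" "0 \<le> \<eta>" "\<eta> \<le> 1"
    and "\<epsilon> \<le> 1" and small_\<epsilon>: "q * (q - 1) * \<epsilon> powr (q - 2) \<le> 1 / 4"
    and small_\<zeta>: "\<delta> / z\<^sup>2 \<le> 1 / 2" and "s \<ge> 0"
    and in_D: "\<And>k. k \<le> Suc N \<Longrightarrow> p k \<in> Dzeta b \<zeta>"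
    and start: "snd (p 0) = - s" and finish: "p (Suc N) = (\<epsilon> powr q, \<epsilon>)"
    and levels: "\<And>k. k \<le> N \<Longrightarrow> snd (p (Suc k)) = lev k" and "lev 0 = 0"
    and lev_less: "\<And>k. k < N \<Longrightarrow> lev k < lev (Suc k)"
    and oscillation: "\<And>k. k < N \<Longrightarrow> sqrt (\<zeta> + lev (Suc k) ^ b) \<le> sqrt (\<zeta> + lev k ^ b) + \<eta>"
  shows "s + profile_arclength q \<epsilon> - \<eta> - \<delta> / z \<le> (\<Sum>i<Suc N. norm (p (Suc i) - p i))"
proof -
  define \<Phi> where "\<Phi> = calibration q \<delta> z \<eta>"
  have "q > 1" "z > 0" "\<delta> \<ge> 0"
    using assms by (auto simp: q_def z_def \<delta>_def)
  have lev_le: "lev k \<le> lev k'" if "k \<le> k'" "k' \<le> N" for k k'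
    by (rule lift_Suc_mono_le_bounded[OF _ that]) (use lev_less in \<open>auto intro: less_imp_le\<close>)
  have "lev N = \<epsilon>"
    using levels[of N] finish by simp
  then have lev_range: "0 \<le> lev k" "lev k \<le> \<epsilon>" if "k \<le> N" for k
    using lev_le[of 0 k] lev_le[of k N] that \<open>lev 0 = 0\<close> by auto
  have "norm (snd (p 1 - p 0)) \<le> norm (p 1 - p 0)"
    by (metis norm_snd_le prod.collapse)
  then have first: "s \<le> norm (p 1 - p 0)"
    using levels[of 0] start \<open>lev 0 = 0\<close> \<open>s \<ge> 0\<close> by simp
  have step: "\<Phi> (p (Suc (Suc k))) - \<Phi> (p (Suc k)) \<le> norm (p (Suc (Suc k)) - p (Suc k))" if "k < N" for k
  proof -
    have p_eq: "p (Suc k) = (fst (p (Suc k)), lev k)"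
      "p (Suc (Suc k)) = (fst (p (Suc (Suc k))), lev (Suc k))"
      using levels[of k] levels[of "Suc k"] that by (simp_all add: prod_eq_iff)
    have "\<Phi> (fst (p (Suc (Suc k))), lev (Suc k)) - \<Phi> (fst (p (Suc k)), lev k)
        \<le> norm ((fst (p (Suc (Suc k))), lev (Suc k)) - (fst (p (Suc k)), lev k))"
      unfolding \<Phi>_def
      by (rule calibration_increment_le_norm_Dzeta[OF q_def \<delta>_def z_def assms(4-7) \<open>\<epsilon> \<le> 1\<close> small_\<epsilon> small_\<zeta>
            lev_range(1) lev_less lev_range(2) oscillation])
        (use that in_D[of "Suc k"] in_D[of "Suc (Suc k)"] p_eq in auto)
    then show ?thesis
      using p_eq by simp
  qed
  have "\<Phi> (p (Suc N)) - \<Phi> (p 1) = (\<Sum>k<N. \<Phi> (p (Suc (Suc k))) - \<Phi> (p (Suc k)))"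
    using sum_lessThan_telescope[of "\<lambda>k. \<Phi> (p (Suc k))" N] by simp
  also have "\<dots> \<le> (\<Sum>k<N. norm (p (Suc (Suc k)) - p (Suc k)))"
    using step by (intro sum_mono) auto
  finally have rest: "\<Phi> (p (Suc N)) - \<Phi> (p 1) \<le> (\<Sum>k<N. norm (p (Suc (Suc k)) - p (Suc k)))" .
  have "p 1 = (fst (p 1), 0)"
    using levels[of 0] \<open>lev 0 = 0\<close> by (simp add: prod_eq_iff)
  then have "\<Phi> (p 1) = \<delta> / z"
    using calibration_height_0[OF \<open>q > 1\<close>] by (metis \<Phi>_def)
  moreover have "profile_arclength q \<epsilon> - \<eta> \<le> \<Phi> (p (Suc N))"
    using calibration_on_profile_ge[OF \<open>0 \<le> \<eta>\<close> \<open>\<delta> \<ge> 0\<close>, of \<epsilon> z q] lev_range[of N] \<open>lev N = \<epsilon>\<close> \<open>z > 0\<close>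
    by (simp add: \<Phi>_def finish)
  moreover have "(\<Sum>i<Suc N. norm (p (Suc i) - p i)) =
      norm (p 1 - p 0) + (\<Sum>k<N. norm (p (Suc (Suc k)) - p (Suc k)))"
    by (subst sum.lessThan_Suc_shift) simp
  ultimately show ?thesis
    using first rest by linarith
qed

section \<open>The lower bound\<close>

lemma curve_length_ge_calibration:
  fixes b :: nat and \<nu> :: "real \<Rightarrow> real \<times> real"
  assumes q_def: "q = real b / 2" and \<delta>_def: "\<delta> = 4 * q * (q - 1) * \<zeta>" and z_def: "z = \<zeta> powr (1 / real b)"
    and "b \<ge> 4" "\<zeta> > 0" "0 < \<eta>" "\<eta> \<le> 1"
    and "0 < \<epsilon>" "\<epsilon> \<le> 1" and small_\<epsilon>: "q * (q - 1) * \<epsilon> powr (q - 2) \<le> 1 / 4"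
    and small_\<zeta>: "\<delta> / z\<^sup>2 \<le> 1 / 2" and "s \<ge> 0"
    and curve: "abs_cont_on 0 1 \<nu>" "\<nu> 0 = (0, - s)" "\<nu> 1 = (\<epsilon> powr q, \<epsilon>)" "\<nu> ` {0..1} \<subseteq> Dzeta b \<zeta>"
  shows "s + profile_arclength q \<epsilon> - \<eta> - \<delta> / z \<le> curve_length 0 1 \<nu>"
proof -
  have "continuous_on {0..\<epsilon>} (\<lambda>y. sqrt (\<zeta> + y ^ b))"
    by (intro continuous_intros)
  then obtain N :: nat where "N > 0" and N: "\<And>k. k < N \<Longrightarrow>
      dist (sqrt (\<zeta> + (real (Suc k) * \<epsilon> / real N) ^ b)) (sqrt (\<zeta> + (real k * \<epsilon> / real N) ^ b)) < \<eta>"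
    using continuous_on_grid_oscillation[of 0 \<epsilon> _ \<eta>] \<open>0 < \<epsilon>\<close> \<open>0 < \<eta>\<close> by auto
  define lev where "lev k = real k * \<epsilon> / real N" for k
  define L where "L k = (if k = 0 then - s else lev (k - 1))" for k
  have "mono lev"
    using \<open>0 < \<epsilon>\<close> by (auto intro!: monoI divide_right_mono mult_right_mono simp: lev_def)
  have "mono L"
  proof (rule monoI)
    fix k k' :: nat assume "k \<le> k'"
    then show "L k \<le> L k'"
      using monoD[OF \<open>mono lev\<close>, of "k - 1" "k' - 1"] monoD[OF \<open>mono lev\<close>, of 0 "k' - 1"] \<open>s \<ge> 0\<close>
      by (auto simp: L_def lev_def[of 0])
  qed
  moreover have "continuous_on {0..1} (\<lambda>u. snd (\<nu> u))"
    using abs_cont_on_imp_continuous_on[OF curve(1)] by (intro continuous_intros)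
  moreover have "snd (\<nu> 0) = L 0" "snd (\<nu> 1) = L (Suc N)"
    using curve(2,3) \<open>N > 0\<close> by (simp_all add: L_def lev_def)
  ultimately obtain t where t0: "t 0 = 0" and t1: "t (Suc N) = 1" and t_mono: "\<forall>i<Suc N. t i \<le> t (Suc i)"
    and t_levels: "\<forall>k\<le>Suc N. snd (\<nu> (t k)) = L k"
    using continuous_on_level_partition[of 0 1 "\<lambda>u. snd (\<nu> u)" L "Suc N"] by auto
  have "t k \<in> {0..1}" if "k \<le> Suc N" for k
    using lift_Suc_mono_le_bounded[OF t_mono, of 0 k] lift_Suc_mono_le_bounded[OF t_mono, of k "Suc N"]
      that t0 t1 by auto
  then have in_D: "\<nu> (t k) \<in> Dzeta b \<zeta>" if "k \<le> Suc N" for k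
    using curve(4) that by blast
  have levels: "snd (\<nu> (t (Suc k))) = lev k" if "k \<le> N" for k
    using t_levels that by (simp add: L_def)
  have lev_less: "lev k < lev (Suc k)" for k
    using \<open>0 < \<epsilon>\<close> \<open>N > 0\<close> by (simp add: lev_def divide_strict_right_mono)
  have oscillation: "sqrt (\<zeta> + lev (Suc k) ^ b) \<le> sqrt (\<zeta> + lev k ^ b) + \<eta>" if "k < N" for k
    using N[OF that] by (simp add: lev_def dist_real_def)
  have "s + profile_arclength q \<epsilon> - \<eta> - \<delta> / z \<le> (\<Sum>i<Suc N. norm (\<nu> (t (Suc i)) - \<nu> (t i)))"
    by (rule polygon_length_ge_calibration[where p = "\<lambda>k. \<nu> (t k)" and lev = lev,
          OF q_def \<delta>_def z_def \<open>b \<ge> 4\<close> \<open>\<zeta> > 0\<close> _ \<open>\<eta> \<le> 1\<close> \<open>\<epsilon> \<le> 1\<close> small_\<epsilon> small_\<zeta> \<open>s \<ge> 0\<close>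
          in_D _ _ levels _ lev_less oscillation])
      (use \<open>0 < \<eta>\<close> t0 t1 curve(2,3) in \<open>simp_all add: lev_def\<close>)
  also have "\<dots> \<le> curve_length 0 1 \<nu>"
    by (rule polygon_length_le_curve_length[OF curve(1) t0 t1 t_mono])
  finally show ?thesis .
qed

lemma curve_length_ge_L_SR:
  fixes b :: nat and \<nu> :: "real \<Rightarrow> real \<times> real"
  assumes q_def: "q = real b / 2"
    and "b \<ge> 4" "0 < \<epsilon>" "\<epsilon> \<le> 1" and small_\<epsilon>: "q * (q - 1) * \<epsilon> powr (q - 2) \<le> 1 / 4"
    and "\<zeta> > 0" and small_\<zeta>: "8 * q * (q - 1) * \<zeta> powr (1 - 2 / real b) \<le> 1" and "s \<ge> 0"
    and curve: "abs_cont_on 0 1 \<nu>" "\<nu> 0 = (0, - s)" "\<nu> 1 = (\<epsilon> powr q, \<epsilon>)" "\<nu> ` {0..1} \<subseteq> Dzeta b \<zeta>"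
  shows "L_SR b s \<epsilon> - 4 * q * (q - 1) * \<zeta> powr (1 - 1 / real b) \<le> curve_length 0 1 \<nu>"
proof -
  define \<delta> z where "\<delta> = 4 * q * (q - 1) * \<zeta>" and "z = \<zeta> powr (1 / real b)"
  have "z\<^sup>2 = \<zeta> powr (2 / real b)"
    by (simp add: z_def power2_eq_square flip: powr_add)
  then have "\<zeta> / z\<^sup>2 = \<zeta> powr (1 - 2 / real b)"
    using \<open>\<zeta> > 0\<close> by (simp add: powr_diff)
  then have "\<delta> / z\<^sup>2 = 4 * q * (q - 1) * \<zeta> powr (1 - 2 / real b)"
    by (simp add: \<delta>_def flip: times_divide_eq_right)
  then have "\<delta> / z\<^sup>2 \<le> 1 / 2"
    using small_\<zeta> by linarith
  have "\<zeta> / z = \<zeta> powr (1 - 1 / real b)"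
    using \<open>\<zeta> > 0\<close> by (simp add: z_def powr_diff)
  then have \<delta>_div_z: "\<delta> / z = 4 * q * (q - 1) * \<zeta> powr (1 - 1 / real b)"
    by (simp add: \<delta>_def flip: times_divide_eq_right)
  have L_SR_eq: "L_SR b s \<epsilon> = s + profile_arclength q \<epsilon>"
    using L_SR_eq_profile_arclength[of b s \<epsilon>] \<open>b \<ge> 4\<close> by (simp add: q_def)
  have bound: "L_SR b s \<epsilon> - \<delta> / z \<le> curve_length 0 1 \<nu> + \<eta>" if "0 < \<eta>" "\<eta> \<le> 1" for \<eta>
    using curve_length_ge_calibration[OF q_def \<delta>_def z_def \<open>b \<ge> 4\<close> \<open>\<zeta> > 0\<close> that \<open>0 < \<epsilon>\<close> \<open>\<epsilon> \<le> 1\<close>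
        small_\<epsilon> \<open>\<delta> / z\<^sup>2 \<le> 1 / 2\<close> \<open>s \<ge> 0\<close> curve] L_SR_eq
    by linarith
  have "L_SR b s \<epsilon> - \<delta> / z \<le> curve_length 0 1 \<nu>"
  proof (rule field_le_epsilon)
    fix e :: real assume "0 < e"
    then have "L_SR b s \<epsilon> - \<delta> / z \<le> curve_length 0 1 \<nu> + min e 1"
      by (intro bound) auto
    then show "L_SR b s \<epsilon> - \<delta> / z \<le> curve_length 0 1 \<nu> + e"
      by linarith
  qed
  then show ?thesis
    by (simp add: \<delta>_div_z)
qed

lemma eventually_small_scale:
  fixes q C a :: real
  assumes "q > 2" "C > 0" "a > 0"
  shows "\<forall>\<^sub>F \<epsilon> in at_right 0. \<epsilon> < 1 \<and> q * (q - 1) * \<epsilon> powr (q - 2) < 1 / 4 \<and>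
    8 * q * (q - 1) * (C * \<epsilon> powr (3 * q - 1)) powr a < 1"
proof -
  have nonneg: "\<forall>\<^sub>F \<epsilon> in at_right (0::real). 0 \<le> \<epsilon>"
    using eventually_at_right_less by (rule eventually_mono) simp
  have powr_to_0: "((\<lambda>\<epsilon>::real. \<epsilon> powr e) \<longlongrightarrow> 0) (at_right 0)" if "e > 0" for e
    by (rule tendsto_zero_powrI[OF tendsto_ident_at tendsto_const nonneg that])
  have lim_q: "((\<lambda>\<epsilon>. q * (q - 1) * \<epsilon> powr (q - 2)) \<longlongrightarrow> 0) (at_right 0)"
    using assms by (intro tendsto_mult_right_zero powr_to_0) simp
  have lim_\<zeta>: "((\<lambda>\<epsilon>. 8 * q * (q - 1) * (C * \<epsilon> powr (3 * q - 1)) powr a) \<longlongrightarrow> 0) (at_right 0)"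
  proof (rule tendsto_mult_right_zero, rule tendsto_zero_powrI[OF _ tendsto_const _ \<open>a > 0\<close>])
    show "((\<lambda>\<epsilon>. C * \<epsilon> powr (3 * q - 1)) \<longlongrightarrow> 0) (at_right 0)"
      using assms by (intro tendsto_mult_right_zero powr_to_0) simp
    show "\<forall>\<^sub>F \<epsilon> in at_right 0. 0 \<le> C * \<epsilon> powr (3 * q - 1)"
      using \<open>C > 0\<close> by simp
  qed
  show ?thesis
    by (intro eventually_conj order_tendstoD(2)[OF tendsto_ident_at] order_tendstoD(2)[OF lim_q]
        order_tendstoD(2)[OF lim_\<zeta>]) simp_all
qed

theorem mainTheorem8:
  fixes b :: nat and C :: real
  assumes "odd b" and "b \<ge> 5" and "C > 0"
  defines "q \<equiv> real b / 2"
  shows "\<exists>K>0. \<exists>\<epsilon>0>0. \<forall>\<epsilon> \<zeta> s.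
           0 < \<epsilon> \<and> \<epsilon> < \<epsilon>0 \<and> 0 < \<zeta> \<and> \<zeta> \<le> C * \<epsilon> powr (3 * q - 1) \<and> s \<ge> 0 \<longrightarrow>
           (\<forall>\<nu> :: real \<Rightarrow> real \<times> real.
              abs_cont_on 0 1 \<nu> \<and> \<nu> 0 = (0, - s) \<and> \<nu> 1 = (\<epsilon> powr q, \<epsilon>) \<and>
              \<nu> ` {0..1} \<subseteq> Dzeta b \<zeta>
              \<longrightarrow> curve_length 0 1 \<nu> \<ge> L_SR b s \<epsilon> - K * \<zeta> powr (1 - 1 / real b))"
proof -
  have "q > 2" "1 - 2 / real b > 0"
    using assms by (auto simp: q_def field_simps)
  obtain \<epsilon>0 where "\<epsilon>0 > 0" and small: "\<And>\<epsilon>. 0 < \<epsilon> \<Longrightarrow> \<epsilon> < \<epsilon>0 \<Longrightarrow> \<epsilon> < 1 \<and>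
      q * (q - 1) * \<epsilon> powr (q - 2) < 1 / 4 \<and> 8 * q * (q - 1) * (C * \<epsilon> powr (3 * q - 1)) powr (1 - 2 / real b) < 1"
    using eventually_small_scale[OF \<open>q > 2\<close> \<open>C > 0\<close> \<open>1 - 2 / real b > 0\<close>]
    unfolding eventually_at_right_field by blast
  show ?thesis
  proof (intro exI conjI allI impI)
    show "4 * q * (q - 1) > 0" "\<epsilon>0 > 0"
      using \<open>q > 2\<close> \<open>\<epsilon>0 > 0\<close> by auto
    fix \<epsilon> \<zeta> s :: real and \<nu> :: "real \<Rightarrow> real \<times> real"
    assume scales: "0 < \<epsilon> \<and> \<epsilon> < \<epsilon>0 \<and> 0 < \<zeta> \<and> \<zeta> \<le> C * \<epsilon> powr (3 * q - 1) \<and> s \<ge> 0"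
      and curve: "abs_cont_on 0 1 \<nu> \<and> \<nu> 0 = (0, - s) \<and> \<nu> 1 = (\<epsilon> powr q, \<epsilon>) \<and> \<nu> ` {0..1} \<subseteq> Dzeta b \<zeta>"
    have "\<zeta> powr (1 - 2 / real b) \<le> (C * \<epsilon> powr (3 * q - 1)) powr (1 - 2 / real b)"
      using scales \<open>1 - 2 / real b > 0\<close> by (intro powr_mono2) auto
    then have "8 * q * (q - 1) * \<zeta> powr (1 - 2 / real b) \<le>
        8 * q * (q - 1) * (C * \<epsilon> powr (3 * q - 1)) powr (1 - 2 / real b)"
      using \<open>q > 2\<close> by (intro mult_left_mono) auto
    then have "8 * q * (q - 1) * \<zeta> powr (1 - 2 / real b) \<le> 1"
      using small[of \<epsilon>] scales by linarith
    then show "L_SR b s \<epsilon> - 4 * q * (q - 1) * \<zeta> powr (1 - 1 / real b) \<le> curve_length 0 1 \<nu>"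
      using curve_length_ge_L_SR[OF q_def[THEN meta_eq_to_obj_eq]] small[of \<epsilon>] scales curve \<open>b \<ge> 5\<close>
      by auto
  qed
qed

end
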